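(* Let $(H,m,u,\Delta,\varepsilon,\omega,s,\alpha,\beta)$ be a dual quasi-Hopf algebra over a field $\Bbbk$. Then $S:=\beta\ast s\ast\alpha$, i.e. $S(h)=\beta(h_1)s(h_2)\alpha(h_3)$, is a preantipode for $H$.
   Context: A dual quasi-bialgebra is a datum $(H,m,u,\Delta,\varepsilon,\omega)$ where $(H,\Delta,\varepsilon)$ is a coassociative counital coalgebra over $\Bbbk$; $m:H\otimes H\to H$, $hk:=m(h\otimes k)$, and $u:\Bbbk\to H$, $1_H:=u(1)$, are coalgebra maps with $1_Hh=h=h1_H$; and $\omega:H\otimes H\otimes H\to\Bbbk$ is convolution invertible with inverse $\omega^{-1}$, satisfies $\omega(h\otimes k\otimes l)=\varepsilon(h)\varepsilon(k)\varepsilon(l)$ whenever $1_H\in\{h,k,l\}$, the 3-cocycle condition $\omega(h_1\otimes k_1\otimes l_1m_1)\omega(h_2k_2\otimes l_2\otimes m_2)=\omega(k_1\otimes l_1\otimes m_1)\omega(h_1\otimes k_2l_2\otimes m_2)\omega(h_2\otimes k_3\otimes l_3)$, and quasi-associativity $h_1(k_1l_1)\omega(h_2\otimes k_2\otimes l_2)=\omega(h_1\otimes k_1\otimes l_1)(h_2k_2)l_2$ (Sweedler notation $\Delta(h)=h_1\otimes h_2$). A dual quasi-Hopf algebra $(H,m,u,\Delta,\varepsilon,\omega,s,\alpha,\beta)$ is a dual quasi-bialgebra with a coalgebra anti-morphism $s:H\to H$ and $\alpha,\beta\in H^*$ such that for all $h\in H$: $h_1\beta(h_2)s(h_3)=\beta(h)1_H$;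 $s(h_1)\alpha(h_2)h_3=\alpha(h)1_H$; $\omega(h_1\otimes\beta(h_2)s(h_3)\alpha(h_4)\otimes h_5)=\varepsilon(h)=\omega^{-1}(s(h_1)\otimes\alpha(h_2)h_3\beta(h_4)\otimes s(h_5))$. A preantipode for a dual quasi-bialgebra $H$ is a $\Bbbk$-linear map $S:H\to H$ such that for all $x\in H$: $S(x_2)_1\otimes x_1S(x_2)_2=S(x)\otimes 1_H$; $\omega(x_1\otimes S(x_2)\otimes x_3)=\varepsilon(x)$; $S(x_1)_1x_2\otimes S(x_1)_2=1_H\otimes S(x)$. *)

theory Defs
  imports Main "HOL.Vector_Spaces"
begin

text \<open>
An element of the n-fold tensor power of H is represented by a finite list of
n-tuples (as lists of length n), standing for the sum of the corresponding simple
tensors.  Two such representatives denote the same tensor iff they agree under every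
functional f_1 (x) ... (x) f_n with linear f_i (over a field, H^* (x) ... (x) H^*
separates the points of H (x) ... (x) H).

Delta is given by cop :: 'h => ('h * 'h) list, a chosen
representative of Delta(h) = sum h_1 (x) h_2.  The iterated Sweedler representative
sw cop n h is a list of (n+1)-tuples (h_1,...,h_{n+1}), obtained by applying Delta
repeatedly to the last tensor factor.  Sweedler sums of multilinear expressions are
computed as sums over these lists.
\<close>

definition tens_eq ::
  "('k::field \<Rightarrow> 'h::ab_group_add \<Rightarrow> 'h) \<Rightarrow> nat \<Rightarrow> 'h list list \<Rightarrow> 'h list list \<Rightarrow> bool" where
  "tens_eq sc n L M \<longleftrightarrow>
     (\<forall>fs. length fs = n \<longrightarrow> (\<forall>f\<in>set fs. Vector_Spaces.linear sc (*) f) \<longrightarrow>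
        (\<Sum>t\<leftarrow>L. prod_list (map2 (\<lambda>f x. f x) fs t)) =
        (\<Sum>t\<leftarrow>M. prod_list (map2 (\<lambda>f x. f x) fs t)))"

fun sw :: "('h \<Rightarrow> ('h \<times> 'h) list) \<Rightarrow> nat \<Rightarrow> 'h \<Rightarrow> 'h list list" where
  "sw cop 0 h = [[h]]"
| "sw cop (Suc n) h = concat (map (\<lambda>(a, b). map (\<lambda>t. a # t) (sw cop n b)) (cop h))"

definition bilinear_map ::
  "('k::field \<Rightarrow> 'h::ab_group_add \<Rightarrow> 'h) \<Rightarrow> ('h \<Rightarrow> 'h \<Rightarrow> 'h) \<Rightarrow> bool" where
  "bilinear_map sc m \<longleftrightarrow>
     (\<forall>x. Vector_Spaces.linear sc sc (m x)) \<and> (\<forall>y. Vector_Spaces.linear sc sc (\<lambda>x. m x y))"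

definition trilinear_form ::
  "('k::field \<Rightarrow> 'h::ab_group_add \<Rightarrow> 'h) \<Rightarrow> ('h \<Rightarrow> 'h \<Rightarrow> 'h \<Rightarrow> 'k) \<Rightarrow> bool" where
  "trilinear_form sc w \<longleftrightarrow>
     (\<forall>y z. Vector_Spaces.linear sc (*) (\<lambda>x. w x y z)) \<and>
     (\<forall>x z. Vector_Spaces.linear sc (*) (\<lambda>y. w x y z)) \<and>
     (\<forall>x y. Vector_Spaces.linear sc (*) (\<lambda>z. w x y z))"

definition coalgebra ::
  "('k::field \<Rightarrow> 'h::ab_group_add \<Rightarrow> 'h) \<Rightarrow> ('h \<Rightarrow> ('h \<times> 'h) list) \<Rightarrow> ('h \<Rightarrow> 'k) \<Rightarrow> bool" where
  "coalgebra sc cop eps \<longleftrightarrow>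
     vector_space sc \<and>
     Vector_Spaces.linear sc (*) eps \<and>
     (\<forall>a x y. tens_eq sc 2 (sw cop 1 (sc a x + y))
                 (map (\<lambda>t. [sc a (t!0), t!1]) (sw cop 1 x) @ sw cop 1 y)) \<and>
     (\<forall>h. tens_eq sc 3
            (concat (map (\<lambda>(a, b). map (\<lambda>(c, d). [c, d, b]) (cop a)) (cop h)))
            (sw cop 2 h)) \<and>
     (\<forall>h. (\<Sum>t\<leftarrow>sw cop 1 h. sc (eps (t!0)) (t!1)) = h) \<and>
     (\<forall>h. (\<Sum>t\<leftarrow>sw cop 1 h. sc (eps (t!1)) (t!0)) = h)"

definition dual_quasi_bialgebra ::
  "('k::field \<Rightarrow> 'h::ab_group_add \<Rightarrow> 'h) \<Rightarrow> ('h \<Rightarrow> 'h \<Rightarrow> 'h) \<Rightarrow> 'h \<Rightarrow>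
   ('h \<Rightarrow> ('h \<times> 'h) list) \<Rightarrow> ('h \<Rightarrow> 'k) \<Rightarrow>
   ('h \<Rightarrow> 'h \<Rightarrow> 'h \<Rightarrow> 'k) \<Rightarrow> ('h \<Rightarrow> 'h \<Rightarrow> 'h \<Rightarrow> 'k) \<Rightarrow> bool" where
  "dual_quasi_bialgebra sc m one cop eps w wi \<longleftrightarrow>
     coalgebra sc cop eps \<and>
     \<comment> \<open>m is linear on H (x) H and a coalgebra map\<close>
     bilinear_map sc m \<and>
     (\<forall>h k. tens_eq sc 2 (sw cop 1 (m h k))
              (concat (map (\<lambda>s. map (\<lambda>t. [m (s!0) (t!0), m (s!1) (t!1)]) (sw cop 1 k))
                        (sw cop 1 h)))) \<and>
     (\<forall>h k. eps (m h k) = eps h * eps k) \<and>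
     \<comment> \<open>u : k -> H, u(c) = c 1_H, is a coalgebra map, and 1_H is a two-sided unit\<close>
     tens_eq sc 2 (sw cop 1 one) [[one, one]] \<and>
     eps one = 1 \<and>
     (\<forall>h. m one h = h \<and> m h one = h) \<and>
     \<comment> \<open>omega is a linear form on H (x) H (x) H, with convolution inverse wi\<close>
     trilinear_form sc w \<and> trilinear_form sc wi \<and>
     (\<forall>h k l. (\<Sum>a\<leftarrow>sw cop 1 h. \<Sum>b\<leftarrow>sw cop 1 k. \<Sum>c\<leftarrow>sw cop 1 l.
                  w (a!0) (b!0) (c!0) * wi (a!1) (b!1) (c!1)) = eps h * eps k * eps l) \<and>
     (\<forall>h k l. (\<Sum>a\<leftarrow>sw cop 1 h. \<Sum>b\<leftarrow>sw cop 1 k. \<Sum>c\<leftarrow>sw cop 1 l.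
                  wi (a!0) (b!0) (c!0) * w (a!1) (b!1) (c!1)) = eps h * eps k * eps l) \<and>
     \<comment> \<open>normalization\<close>
     (\<forall>h k l. (h = one \<or> k = one \<or> l = one) \<longrightarrow> w h k l = eps h * eps k * eps l) \<and>
     \<comment> \<open>3-cocycle condition\<close>
     (\<forall>h k l n.
        (\<Sum>a\<leftarrow>sw cop 1 h. \<Sum>b\<leftarrow>sw cop 1 k. \<Sum>c\<leftarrow>sw cop 1 l. \<Sum>d\<leftarrow>sw cop 1 n.
            w (a!0) (b!0) (m (c!0) (d!0)) * w (m (a!1) (b!1)) (c!1) (d!1)) =
        (\<Sum>a\<leftarrow>sw cop 1 h. \<Sum>b\<leftarrow>sw cop 2 k. \<Sum>c\<leftarrow>sw cop 2 l. \<Sum>d\<leftarrow>sw cop 1 n.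
            w (b!0) (c!0) (d!0) * w (a!0) (m (b!1) (c!1)) (d!1) * w (a!1) (b!2) (c!2))) \<and>
     \<comment> \<open>quasi-associativity\<close>
     (\<forall>h k l.
        (\<Sum>a\<leftarrow>sw cop 1 h. \<Sum>b\<leftarrow>sw cop 1 k. \<Sum>c\<leftarrow>sw cop 1 l.
            sc (w (a!1) (b!1) (c!1)) (m (a!0) (m (b!0) (c!0)))) =
        (\<Sum>a\<leftarrow>sw cop 1 h. \<Sum>b\<leftarrow>sw cop 1 k. \<Sum>c\<leftarrow>sw cop 1 l.
            sc (w (a!0) (b!0) (c!0)) (m (m (a!1) (b!1)) (c!1))))"

definition dual_quasi_hopf ::
  "('k::field \<Rightarrow> 'h::ab_group_add \<Rightarrow> 'h) \<Rightarrow> ('h \<Rightarrow> 'h \<Rightarrow> 'h) \<Rightarrow> 'h \<Rightarrow>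
   ('h \<Rightarrow> ('h \<times> 'h) list) \<Rightarrow> ('h \<Rightarrow> 'k) \<Rightarrow>
   ('h \<Rightarrow> 'h \<Rightarrow> 'h \<Rightarrow> 'k) \<Rightarrow> ('h \<Rightarrow> 'h \<Rightarrow> 'h \<Rightarrow> 'k) \<Rightarrow>
   ('h \<Rightarrow> 'h) \<Rightarrow> ('h \<Rightarrow> 'k) \<Rightarrow> ('h \<Rightarrow> 'k) \<Rightarrow> bool" where
  "dual_quasi_hopf sc m one cop eps w wi s \<alpha> \<beta> \<longleftrightarrow>
     dual_quasi_bialgebra sc m one cop eps w wi \<and>
     \<comment> \<open>s is a coalgebra anti-morphism\<close>
     Vector_Spaces.linear sc sc s \<and>
     (\<forall>h. tens_eq sc 2 (sw cop 1 (s h)) (map (\<lambda>t. [s (t!1), s (t!0)]) (sw cop 1 h))) \<and>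
     (\<forall>h. eps (s h) = eps h) \<and>
     Vector_Spaces.linear sc (*) \<alpha> \<and> Vector_Spaces.linear sc (*) \<beta> \<and>
     (\<forall>h. (\<Sum>t\<leftarrow>sw cop 2 h. sc (\<beta> (t!1)) (m (t!0) (s (t!2)))) = sc (\<beta> h) one) \<and>
     (\<forall>h. (\<Sum>t\<leftarrow>sw cop 2 h. sc (\<alpha> (t!1)) (m (s (t!0)) (t!2))) = sc (\<alpha> h) one) \<and>
     (\<forall>h. (\<Sum>t\<leftarrow>sw cop 4 h. w (t!0) (sc (\<beta> (t!1) * \<alpha> (t!3)) (s (t!2))) (t!4)) = eps h) \<and>
     (\<forall>h. (\<Sum>t\<leftarrow>sw cop 4 h. wi (s (t!0)) (sc (\<alpha> (t!1) * \<beta> (t!3)) (t!2)) (s (t!4))) = eps h)"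

definition preantipode ::
  "('k::field \<Rightarrow> 'h::ab_group_add \<Rightarrow> 'h) \<Rightarrow> ('h \<Rightarrow> 'h \<Rightarrow> 'h) \<Rightarrow> 'h \<Rightarrow>
   ('h \<Rightarrow> ('h \<times> 'h) list) \<Rightarrow> ('h \<Rightarrow> 'k) \<Rightarrow>
   ('h \<Rightarrow> 'h \<Rightarrow> 'h \<Rightarrow> 'k) \<Rightarrow> ('h \<Rightarrow> 'h) \<Rightarrow> bool" where
  "preantipode sc m one cop eps w S \<longleftrightarrow>
     Vector_Spaces.linear sc sc S \<and>
     (\<forall>x. tens_eq sc 2
            (concat (map (\<lambda>t. map (\<lambda>u. [u!0, m (t!0) (u!1)]) (sw cop 1 (S (t!1)))) (sw cop 1 x)))
            [[S x, one]]) \<and>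
     (\<forall>x. (\<Sum>t\<leftarrow>sw cop 2 x. w (t!0) (S (t!1)) (t!2)) = eps x) \<and>
     (\<forall>x. tens_eq sc 2
            (concat (map (\<lambda>t. map (\<lambda>u. [m (u!0) (t!1), u!1]) (sw cop 1 (S (t!0)))) (sw cop 1 x)))
            [[one, S x]])"

end

theory Submission
  imports Defs
begin

text \<open>
  All identities are checked on Sweedler sums evaluated at multilinear forms. Over a field such
  sums only depend on the tensor they represent (expand every tensor factor in a finite dual
  basis), so the coalgebra axioms give generalised coassociativity: replacing one factor of an
  iterated coproduct by its own iterated coproduct yields the longer iterated coproduct.
  Since s is a coalgebra anti-morphism, the coproduct of S h = \<beta>(h1) s(h2) \<alpha>(h3) is
  \<beta>(h1) \<alpha>(h4) s(h3) \<otimes> s(h2). Substituting this, each preantipode axiom becomes a sum over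
  five Sweedler factors which regroups by coassociativity into one of the defining identities
  h1 \<beta>(h2) s(h3) = \<beta>(h) 1, s(h1) \<alpha>(h2) h3 = \<alpha>(h) 1 and
  \<omega>(h1 \<otimes> \<beta>(h2) s(h3) \<alpha>(h4) \<otimes> h5) = \<epsilon>(h) of a dual quasi-Hopf algebra.
\<close>

lemma sum_list_map_cong:
  "(\<And>t. t \<in> set L \<Longrightarrow> f t = g t) \<Longrightarrow> (\<Sum>t\<leftarrow>L. f t) = (\<Sum>t\<leftarrow>L. g t)"
  by (metis map_cong)

lemma sum_list_swap:
  fixes f :: "'a \<Rightarrow> 'b \<Rightarrow> 'c::comm_monoid_add"
  shows "(\<Sum>i\<leftarrow>I. \<Sum>j\<leftarrow>J. f i j) = (\<Sum>j\<leftarrow>J. \<Sum>i\<leftarrow>I. f i j)"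
  by (induction I) (simp_all add: sum_list_addf)

lemma sum_list_sum_swap:
  fixes f :: "'a \<Rightarrow> 'b \<Rightarrow> 'c::comm_monoid_add"
  shows "(\<Sum>i\<leftarrow>I. \<Sum>j\<in>J. f i j) = (\<Sum>j\<in>J. \<Sum>i\<leftarrow>I. f i j)"
  by (induction I) (simp_all add: sum.distrib)

lemma sum_list_concat_map:
  "(\<Sum>t\<leftarrow>concat (map g xs). f t) = (\<Sum>x\<leftarrow>xs. \<Sum>t\<leftarrow>g x. f t)"
  by (induction xs) auto

lemma length_2_cases: "length t = 2 \<Longrightarrow> (\<And>a b. t = [a, b] \<Longrightarrow> P) \<Longrightarrow> P"
  by (cases t; cases "tl t"; auto)

section \<open>Linear and multilinear forms\<close>

locale linear_forms = vector_space_pair sc "(*) :: 'k \<Rightarrow> 'k \<Rightarrow> 'k"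
  for sc :: "'k::field \<Rightarrow> 'h::ab_group_add \<Rightarrow> 'h"
begin

abbreviation linear_form :: "('h \<Rightarrow> 'k) \<Rightarrow> bool" where
  "linear_form \<equiv> Vector_Spaces.linear sc (*)"

text \<open>With scalar multiplication (*), the simp rule a * (b * x) = (a * b) * x of the
  scalar vector space fights associativity and makes algebra_simps loop.\<close>
declare vs2.scale_scale [simp del]

lemma linear_formI:
  assumes "\<And>c x y. f (sc c x + y) = c * f x + f y"
  shows "linear_form f"
proof -
  have "f 0 = 0"
    using assms[of 1 0 0] vs1.scale_one by (metis add_cancel_right_right mult_1)
  then show ?thesis
    unfolding linear_iff using assms[of 1 _ _] assms[of _ _ 0] vs1.vector_space_axioms vs2.vector_space_axioms
    by simp
qed

lemma linear_sum_list:
  "linear_form f \<Longrightarrow> f (\<Sum>u\<leftarrow>U. g u) = (\<Sum>u\<leftarrow>U. f (g u))"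
  by (induction U) (simp_all add: linear_0 linear_add)

lemma linear_compose_sum_list:
  "(\<And>u. u \<in> set U \<Longrightarrow> linear_form (F u)) \<Longrightarrow> linear_form (\<lambda>x. \<Sum>u\<leftarrow>U. F u x)"
  by (induction U) (simp_all add: linear_zero linear_compose_add)

lemma linear_forms_separate:
  assumes "\<And>f. linear_form f \<Longrightarrow> f a = f b"
  shows "a = b"
proof (rule ccontr)
  assume "a \<noteq> b"
  then have indep: "vs1.independent {a - b}" by simp
  define f where "f = construct {a - b} (\<lambda>_. 1)"
  have lin: "linear_form f" unfolding f_def by (rule linear_construct[OF indep])
  have "f (a - b) = 1" unfolding f_def by (rule construct_basis[OF indep]) simp
  moreover have "f (a - b) = 0" using assms[OF lin] by (simp add: linear_diff[OF lin])
  ultimately show False by simp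
qed

lemma finite_dual_coordinates:
  assumes "finite V"
  obtains B c where "finite B" "\<And>b. linear_form (c b)" "\<And>x. x \<in> V \<Longrightarrow> x = (\<Sum>b\<in>B. sc (c b x) b)"
proof -
  obtain B where BV: "B \<subseteq> V" and indep: "vs1.independent B" and span: "V \<subseteq> vs1.span B"
    using vs1.maximal_independent_subset[of V] by blast
  have fin: "finite B" using BV assms finite_subset by blast
  define c where "c b = construct B (\<lambda>b'. if b' = b then 1 else 0)" for b
  have lin: "linear_form (c b)" for b unfolding c_def by (rule linear_construct[OF indep])
  have "x = (\<Sum>b\<in>B. sc (c b x) b)" if x: "x \<in> V" for x
  proof -
    obtain u where u: "x = (\<Sum>v\<in>B. sc (u v) v)"
      using span x vs1.span_finite[OF fin] by auto
    have "c b x = u b" if "b \<in> B" for b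
    proof -
      have "c b x = (\<Sum>v\<in>B. u v * c b v)"
        unfolding u by (simp add: linear_sum[OF lin] linear_scale[OF lin])
      also have "\<dots> = u b"
        using that fin by (simp add: c_def construct_basis[OF indep] if_distrib cong: if_cong)
      finally show ?thesis .
    qed
    then show ?thesis by (simp add: u)
  qed
  with fin lin show ?thesis by (rule that)
qed

lemma tens_eq_2I:
  assumes "\<forall>t\<in>set L \<union> set M. length t = 2"
    and "\<And>f g. linear_form f \<Longrightarrow> linear_form g \<Longrightarrow>
           (\<Sum>t\<leftarrow>L. f (t!0) * g (t!1)) = (\<Sum>t\<leftarrow>M. f (t!0) * g (t!1))"
  shows "tens_eq sc 2 L M"
  unfolding tens_eq_def
proof (intro allI impI)
  fix fs :: "('h \<Rightarrow> 'k) list"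
  assume "length fs = 2" "\<forall>f\<in>set fs. linear_form f"
  then obtain f g where fs: "fs = [f, g]" "linear_form f" "linear_form g"
    by (auto elim: length_2_cases)
  have "prod_list (map2 (\<lambda>f x. f x) fs t) = f (t!0) * g (t!1)" if "t \<in> set L \<union> set M" for t
  proof -
    have "length t = 2" using assms(1) that by blast
    then show ?thesis by (auto simp: fs elim: length_2_cases)
  qed
  then show "(\<Sum>t\<leftarrow>L. prod_list (map2 (\<lambda>f x. f x) fs t)) = (\<Sum>t\<leftarrow>M. prod_list (map2 (\<lambda>f x. f x) fs t))"
    using assms(2)[OF fs(2,3)] by (simp cong: sum_list_map_cong)
qed

definition multilinear_form :: "nat \<Rightarrow> ('h list \<Rightarrow> 'k) \<Rightarrow> bool" where
  "multilinear_form n G \<longleftrightarrow>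
     (\<forall>p q. length p + length q + 1 = n \<longrightarrow> linear_form (\<lambda>x. G (p @ x # q)))"

lemma multilinear_formD:
  "multilinear_form n G \<Longrightarrow> length p + length q + 1 = n \<Longrightarrow> linear_form (\<lambda>x. G (p @ x # q))"
  unfolding multilinear_form_def by blast

lemma multilinear_form_updD:
  assumes "multilinear_form n G" "length t = n" "j < n"
  shows "linear_form (\<lambda>x. G (t[j := x]))"
  using multilinear_formD[OF assms(1), of "take j t" "drop (Suc j) t"] assms(2,3)
  by (simp add: upd_conv_take_nth_drop)

lemma multilinear_form_updI:
  assumes "\<And>t j. length t = n \<Longrightarrow> j < n \<Longrightarrow> linear_form (\<lambda>x. G (t[j := x]))"
  shows "multilinear_form n G"
  unfolding multilinear_form_def
proof (intro allI impI)
  fix p q :: "'h list"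
  assume "length p + length q + 1 = n"
  then have "linear_form (\<lambda>x. G ((p @ 0 # q)[length p := x]))" by (intro assms) auto
  then show "linear_form (\<lambda>x. G (p @ x # q))" by simp
qed

lemma multilinear_formI:
  assumes "\<And>t j x y. length t = n \<Longrightarrow> j < n \<Longrightarrow> G (t[j := x + y]) = G (t[j := x]) + G (t[j := y])"
    and "\<And>t j c x. length t = n \<Longrightarrow> j < n \<Longrightarrow> G (t[j := sc c x]) = c * G (t[j := x])"
  shows "multilinear_form n G"
  using assms vs1.vector_space_axioms vs2.vector_space_axioms
  by (intro multilinear_form_updI) (simp add: linear_iff)

lemma multilinear_form_2I:
  assumes "\<And>b. linear_form (\<lambda>x. P [x, b])" "\<And>a. linear_form (\<lambda>x. P [a, x])"
  shows "multilinear_form 2 P"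
proof (rule multilinear_form_updI)
  fix t :: "'h list" and j :: nat
  assume "length t = 2" "j < 2"
  then obtain a b where "t = [a, b]" "j = 0 \<or> j = 1"
    by (metis length_2_cases less_2_cases One_nat_def)
  then show "linear_form (\<lambda>x. P (t[j := x]))" using assms by auto
qed

lemma multilinear_form_append:
  assumes "multilinear_form (length xs + n + length ys) G"
  shows "multilinear_form n (\<lambda>v. G (xs @ v @ ys))"
  unfolding multilinear_form_def
proof (intro allI impI)
  fix p q :: "'h list"
  assume "length p + length q + 1 = n"
  then have "linear_form (\<lambda>x. G ((xs @ p) @ x # (q @ ys)))"
    by (intro multilinear_formD[OF assms]) simp
  then show "linear_form (\<lambda>x. G (xs @ (p @ x # q) @ ys))" by simp
qed

lemma tens_eq_partial_eval_eq:
  assumes tens: "tens_eq sc n L M" and len: "\<forall>t\<in>set L \<union> set M. length t = n"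
    and fin: "finite B" and lin: "\<And>b. linear_form (c b)"
    and coords: "\<And>t x. t \<in> set L \<union> set M \<Longrightarrow> x \<in> set t \<Longrightarrow> x = (\<Sum>b\<in>B. sc (c b x) b)"
    and "k \<le> n" "multilinear_form k G" "length fs = n - k" "\<forall>f\<in>set fs. linear_form f"
  shows "(\<Sum>t\<leftarrow>L. G (take k t) * prod_list (map2 (\<lambda>f x. f x) fs (drop k t)))
       = (\<Sum>t\<leftarrow>M. G (take k t) * prod_list (map2 (\<lambda>f x. f x) fs (drop k t)))"
  using assms(6-)
proof (induction k arbitrary: G fs)
  case 0
  then show ?case
    using tens unfolding tens_eq_def by (simp add: sum_list_const_mult)
next
  case (Suc k)
  define ev where "ev fs t = prod_list (map2 (\<lambda>f x. f x) fs t)"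
    for fs :: "('h \<Rightarrow> 'k) list" and t :: "'h list"
  \<comment> \<open>Factor k is expanded in the coordinates c b, and the form c b joins the evaluated ones.\<close>
  have expand: "G (take (Suc k) t) * ev fs (drop (Suc k) t) =
      (\<Sum>b\<in>B. G (take k t @ [b]) * ev (c b # fs) (drop k t))"
    if t: "t \<in> set L \<union> set M" for t
  proof -
    have k: "k < length t" using t len Suc.prems(1) by auto
    have "t ! k = (\<Sum>b\<in>B. sc (c b (t ! k)) b)"
      using t nth_mem[OF k] by (rule coords)
    moreover have lin_k: "linear_form (\<lambda>x. G (take k t @ [x]))"
      using k multilinear_formD[OF Suc.prems(2), of "take k t" "[]"] by simp
    ultimately have G_expand: "G (take k t @ [t ! k]) = (\<Sum>b\<in>B. c b (t ! k) * G (take k t @ [b]))"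
      using linear_sum[OF lin_k] linear_scale[OF lin_k] by (metis (mono_tags, lifting) sum.cong)
    have "G (take (Suc k) t) * ev fs (drop (Suc k) t)
        = G (take k t @ [t ! k]) * ev fs (drop (Suc k) t)"
      using k by (simp add: take_Suc_conv_app_nth)
    also have "\<dots> = (\<Sum>b\<in>B. G (take k t @ [b]) * (c b (t ! k) * ev fs (drop (Suc k) t)))"
      unfolding G_expand sum_distrib_right by (simp only: ac_simps)
    also have "\<dots> = (\<Sum>b\<in>B. G (take k t @ [b]) * ev (c b # fs) (drop k t))"
      using k by (simp add: Cons_nth_drop_Suc[symmetric] ev_def)
    finally show ?thesis .
  qed
  have IH: "(\<Sum>t\<leftarrow>L. G (take k t @ [b]) * ev (c b # fs) (drop k t)) =
      (\<Sum>t\<leftarrow>M. G (take k t @ [b]) * ev (c b # fs) (drop k t))" for b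
    unfolding ev_def using Suc.prems lin multilinear_form_append[of "[]" k "[b]" G]
    by (intro Suc.IH[of "\<lambda>p. G (p @ [b])"]) auto
  have "(\<Sum>t\<leftarrow>L. G (take (Suc k) t) * ev fs (drop (Suc k) t))
      = (\<Sum>t\<leftarrow>L. \<Sum>b\<in>B. G (take k t @ [b]) * ev (c b # fs) (drop k t))"
    by (rule sum_list_map_cong) (simp add: expand)
  also have "\<dots> = (\<Sum>t\<leftarrow>M. \<Sum>b\<in>B. G (take k t @ [b]) * ev (c b # fs) (drop k t))"
    by (simp only: sum_list_sum_swap IH)
  also have "\<dots> = (\<Sum>t\<leftarrow>M. G (take (Suc k) t) * ev fs (drop (Suc k) t))"
    by (rule sum_list_map_cong) (simp add: expand)
  finally show ?case unfolding ev_def .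
qed

lemma tens_eq_sum_eq:
  assumes tens: "tens_eq sc n L M"
    and len: "\<forall>t\<in>set L \<union> set M. length t = n"
    and F: "multilinear_form n F"
  shows "(\<Sum>t\<leftarrow>L. F t) = (\<Sum>t\<leftarrow>M. F t)"
proof -
  obtain B c where "finite B" "\<And>b. linear_form (c b)"
    "\<And>x. x \<in> \<Union>(set ` (set L \<union> set M)) \<Longrightarrow> x = (\<Sum>b\<in>B. sc (c b x) b)"
    using finite_dual_coordinates[of "\<Union>(set ` (set L \<union> set M))"] by auto
  then have "(\<Sum>t\<leftarrow>L. F (take n t)) = (\<Sum>t\<leftarrow>M. F (take n t))"
    using tens_eq_partial_eval_eq[OF tens len, of B c n F "[]"] F by auto
  moreover have "(\<Sum>t\<leftarrow>L. F (take n t)) = (\<Sum>t\<leftarrow>L. F t)" "(\<Sum>t\<leftarrow>M. F (take n t)) = (\<Sum>t\<leftarrow>M. F t)"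
    using len by (auto intro: sum_list_map_cong)
  ultimately show ?thesis by simp
qed

end

section \<open>Iterated coproducts\<close>

lemma length_sw: "t \<in> set (sw cop n x) \<Longrightarrow> length t = Suc n"
  by (induction n arbitrary: x t) auto

lemma sum_sw_Suc:
  "(\<Sum>t\<leftarrow>sw cop (Suc n) x. F t) = (\<Sum>(a, b)\<leftarrow>cop x. \<Sum>t\<leftarrow>sw cop n b. F (a # t))"
  by (simp add: sum_list_concat_map o_def split_def)

lemma sum_sw_1: "(\<Sum>t\<leftarrow>sw cop 1 x. F t) = (\<Sum>(a, b)\<leftarrow>cop x. F [a, b])"
  using sum_sw_Suc[where n = 0] by simp

lemma sw_1_memberE: "t \<in> set (sw cop 1 x) \<Longrightarrow> (\<And>a b. t = [a, b] \<Longrightarrow> P) \<Longrightarrow> P"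
  by (drule length_sw) (auto simp: length_Suc_conv)

lemma sw_2_memberE: "t \<in> set (sw cop 2 x) \<Longrightarrow> (\<And>a b c. t = [a, b, c] \<Longrightarrow> P) \<Longrightarrow> P"
  by (drule length_sw) (auto simp: length_Suc_conv numeral_2_eq_2)

declare sw.simps(2) [simp del]

locale sweedler_coalgebra = linear_forms sc
  for sc :: "'k::field \<Rightarrow> 'h::ab_group_add \<Rightarrow> 'h" +
  fixes cop :: "'h \<Rightarrow> ('h \<times> 'h) list" and eps :: "'h \<Rightarrow> 'k"
  assumes coalgebra: "coalgebra sc cop eps"
begin

lemma linear_sum_sw_1:
  assumes P: "multilinear_form 2 P"
  shows "linear_form (\<lambda>y. \<Sum>t\<leftarrow>sw cop 1 y. P t)"
proof (rule linear_formI)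
  fix c x y
  have tens: "tens_eq sc 2 (sw cop 1 (sc c x + y)) (map (\<lambda>t. [sc c (t!0), t!1]) (sw cop 1 x) @ sw cop 1 y)"
    using coalgebra by (simp add: coalgebra_def)
  have "(\<Sum>t\<leftarrow>sw cop 1 (sc c x + y). P t)
      = (\<Sum>t\<leftarrow>map (\<lambda>t. [sc c (t!0), t!1]) (sw cop 1 x) @ sw cop 1 y. P t)"
    by (rule tens_eq_sum_eq[OF tens _ P]) (auto dest: length_sw)
  also have "\<dots> = (\<Sum>t\<leftarrow>sw cop 1 x. P [sc c (t!0), t!1]) + (\<Sum>t\<leftarrow>sw cop 1 y. P t)"
    by (simp add: o_def)
  also have "(\<Sum>t\<leftarrow>sw cop 1 x. P [sc c (t!0), t!1]) = c * (\<Sum>t\<leftarrow>sw cop 1 x. P t)"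
    unfolding sum_sw_1
    using linear_scale[OF multilinear_formD[OF P, of "[]" "[_]"]]
    by (simp add: split_def sum_list_const_mult)
  finally show "(\<Sum>t\<leftarrow>sw cop 1 (sc c x + y). P t) = c * (\<Sum>t\<leftarrow>sw cop 1 x. P t) + (\<Sum>t\<leftarrow>sw cop 1 y. P t)" .
qed

lemma sum_sw_2_coassoc:
  assumes "multilinear_form 3 P"
  shows "(\<Sum>(a, b)\<leftarrow>cop x. \<Sum>(c, d)\<leftarrow>cop a. P [c, d, b]) = (\<Sum>t\<leftarrow>sw cop 2 x. P t)"
proof -
  have tens: "tens_eq sc 3 (concat (map (\<lambda>(a, b). map (\<lambda>(c, d). [c, d, b]) (cop a)) (cop x))) (sw cop 2 x)"
    using coalgebra by (simp add: coalgebra_def)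
  have "(\<Sum>t\<leftarrow>concat (map (\<lambda>(a, b). map (\<lambda>(c, d). [c, d, b]) (cop a)) (cop x)). P t)
      = (\<Sum>t\<leftarrow>sw cop 2 x. P t)"
    by (rule tens_eq_sum_eq[OF tens _ assms]) (auto dest: length_sw)
  then show ?thesis by (simp add: sum_list_concat_map o_def split_def)
qed

lemma linear_sum_sw:
  assumes "multilinear_form (length p + Suc k + length q) G"
  shows "linear_form (\<lambda>y. \<Sum>u\<leftarrow>sw cop k y. G (p @ u @ q))"
  using assms
proof (induction k arbitrary: p)
  case 0
  then show ?case using multilinear_formD[of _ G p q] by simp
next
  case (Suc k)
  define P where "P t = (\<Sum>u\<leftarrow>sw cop k (t!1). G ((p @ [t!0]) @ u @ q))" for t
  have "multilinear_form 2 P"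
  proof (rule multilinear_form_2I)
    fix b
    show "linear_form (\<lambda>x. P [x, b])"
      unfolding P_def using Suc.prems
      by (auto intro!: linear_compose_sum_list multilinear_formD dest: length_sw)
  next
    fix a
    show "linear_form (\<lambda>x. P [a, x])"
      unfolding P_def using Suc.IH[of "p @ [a]"] Suc.prems by simp
  qed
  moreover have "(\<Sum>u\<leftarrow>sw cop (Suc k) y. G (p @ u @ q)) = (\<Sum>t\<leftarrow>sw cop 1 y. P t)" for y
    unfolding sum_sw_Suc sum_sw_1 P_def by (simp add: split_def)
  ultimately show ?case
    using linear_sum_sw_1 by presburger
qed

lemma multilinear_form_sum_sw:
  assumes G: "multilinear_form (a + Suc k + b) G"
  shows "multilinear_form (a + 1 + b) (\<lambda>v. \<Sum>u\<leftarrow>sw cop k (v!a). G (take a v @ u @ drop (Suc a) v))"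
proof (rule multilinear_form_updI)
  fix t :: "'h list" and j :: nat
  assume len: "length t = a + 1 + b" and j: "j < a + 1 + b"
  consider "j < a" | "j = a" | "a < j" by linarith
  then show "linear_form (\<lambda>x. \<Sum>u\<leftarrow>sw cop k (t[j := x] ! a).
               G (take a (t[j := x]) @ u @ drop (Suc a) (t[j := x])))"
  proof cases
    case 1
    have "(\<lambda>x. \<Sum>u\<leftarrow>sw cop k (t[j := x] ! a). G (take a (t[j := x]) @ u @ drop (Suc a) (t[j := x])))
        = (\<lambda>x. \<Sum>u\<leftarrow>sw cop k (t ! a). G ((take a t @ u @ drop (Suc a) t)[j := x]))"
      using 1 len by (simp add: take_update_swap list_update_append1)
    moreover have "linear_form (\<lambda>x. G ((take a t @ u @ drop (Suc a) t)[j := x]))"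
      if "u \<in> set (sw cop k (t ! a))" for u
      using 1 len length_sw[OF that] by (intro multilinear_form_updD[OF G]) auto
    ultimately show ?thesis by (simp add: linear_compose_sum_list)
  next
    case 2
    have "length (take a t) = a" "length (drop (Suc a) t) = b"
      using len by simp_all
    then have "linear_form (\<lambda>y. \<Sum>u\<leftarrow>sw cop k y. G (take a t @ u @ drop (Suc a) t))"
      using G by (intro linear_sum_sw) simp
    moreover have "take a (t[j := x]) = take a t" "drop (Suc a) (t[j := x]) = drop (Suc a) t"
      "t[j := x] ! a = x" for x
      using 2 len by simp_all
    ultimately show ?thesis by simp
  next
    case 3
    have nth_a: "t[j := x] ! a = t ! a" for x
      using 3 by simp
    have "(\<lambda>x. \<Sum>u\<leftarrow>sw cop k (t[j := x] ! a). G (take a (t[j := x]) @ u @ drop (Suc a) (t[j := x])))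
        = (\<lambda>x. \<Sum>u\<leftarrow>sw cop k (t ! a). G ((take a t @ u @ drop (Suc a) t)[j + k := x]))"
      unfolding nth_a using 3 len
      by (intro ext sum_list_map_cong) (auto simp: drop_update_swap list_update_append dest: length_sw)
    moreover have "linear_form (\<lambda>x. G ((take a t @ u @ drop (Suc a) t)[j + k := x]))"
      if "u \<in> set (sw cop k (t ! a))" for u
      using 3 j len length_sw[OF that] by (intro multilinear_form_updD[OF G]) auto
    ultimately show ?thesis by (simp add: linear_compose_sum_list)
  qed
qed

lemma sum_sw_split_first:
  assumes G: "multilinear_form (n + 2) G"
  shows "(\<Sum>t\<leftarrow>sw cop n x. \<Sum>(c, d)\<leftarrow>cop (t!0). G (c # d # tl t)) = (\<Sum>t\<leftarrow>sw cop (Suc n) x. G t)"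
proof (cases n)
  case 0
  then show ?thesis by (simp add: sum_sw_Suc)
next
  case (Suc n')
  define P where "P v = (\<Sum>u\<leftarrow>sw cop n' (v!2). G (take 2 v @ u @ drop (Suc 2) v))" for v
  have "multilinear_form (2 + 1 + 0) P"
    unfolding P_def using G Suc by (intro multilinear_form_sum_sw) simp
  then have P: "multilinear_form 3 P" by simp
  have "(\<Sum>t\<leftarrow>sw cop n x. \<Sum>(c, d)\<leftarrow>cop (t!0). G (c # d # tl t))
      = (\<Sum>(a, b)\<leftarrow>cop x. \<Sum>t\<leftarrow>sw cop n' b. \<Sum>(c, d)\<leftarrow>cop a. G (c # d # t))"
    unfolding Suc sum_sw_Suc by simp
  also have "\<dots> = (\<Sum>(a, b)\<leftarrow>cop x. \<Sum>(c, d)\<leftarrow>cop a. P [c, d, b])"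
    unfolding P_def split_def
    by (rule sum_list_map_cong) (simp add: sum_list_swap[of _ "sw cop n' _"])
  also have "\<dots> = (\<Sum>v\<leftarrow>sw cop 2 x. P v)"
    by (rule sum_sw_2_coassoc[OF P])
  also have "\<dots> = (\<Sum>t\<leftarrow>sw cop (Suc n) x. G t)"
    unfolding Suc numeral_2_eq_2 sum_sw_Suc by (simp add: P_def)
  finally show ?thesis .
qed

lemma sum_sw_split_head:
  assumes "multilinear_form (n + k + 1) G"
  shows "(\<Sum>t\<leftarrow>sw cop n x. \<Sum>u\<leftarrow>sw cop k (t!0). G (u @ tl t)) = (\<Sum>v\<leftarrow>sw cop (n + k) x. G v)"
  using assms
proof (induction k arbitrary: n x G)
  case 0
  have "(\<Sum>t\<leftarrow>sw cop n x. G ([t ! 0] @ tl t)) = (\<Sum>t\<leftarrow>sw cop n x. G t)"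
    by (rule sum_list_map_cong) (auto dest!: length_sw simp: length_Suc_conv)
  then show ?case by simp
next
  case (Suc k)
  define G' where "G' v = (\<Sum>u\<leftarrow>sw cop k (v!1). G (take 1 v @ u @ drop (Suc 1) v))" for v
  have "multilinear_form (1 + 1 + n) G'"
    unfolding G'_def using Suc.prems by (intro multilinear_form_sum_sw) (simp add: ac_simps)
  then have G': "multilinear_form (n + 2) G'" by (simp add: ac_simps)
  have G_Cons: "multilinear_form (n + k + 1) (\<lambda>v. G (a # v))" for a
    using multilinear_form_append[of "[a]" "n + k + 1" "[]" G] Suc.prems by simp
  have "(\<Sum>t\<leftarrow>sw cop n x. \<Sum>u\<leftarrow>sw cop (Suc k) (t!0). G (u @ tl t))
      = (\<Sum>t\<leftarrow>sw cop n x. \<Sum>(c, d)\<leftarrow>cop (t!0). G' (c # d # tl t))"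
    unfolding sum_sw_Suc G'_def by (simp add: split_def)
  also have "\<dots> = (\<Sum>v\<leftarrow>sw cop (Suc n) x. G' v)"
    by (rule sum_sw_split_first[OF G'])
  also have "\<dots> = (\<Sum>(a, b)\<leftarrow>cop x. \<Sum>v\<leftarrow>sw cop n b. \<Sum>u\<leftarrow>sw cop k (v!0). G (a # u @ tl v))"
    unfolding sum_sw_Suc G'_def by (simp add: drop_Suc)
  also have "\<dots> = (\<Sum>(a, b)\<leftarrow>cop x. \<Sum>v\<leftarrow>sw cop (n + k) b. G (a # v))"
    using Suc.IH[OF G_Cons] by simp
  also have "\<dots> = (\<Sum>v\<leftarrow>sw cop (n + Suc k) x. G v)"
    unfolding add_Suc_right sum_sw_Suc ..
  finally show ?case .
qed

lemma sum_sw_split: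
  assumes "i \<le> n" "multilinear_form (n + k + 1) G"
  shows "(\<Sum>t\<leftarrow>sw cop n x. \<Sum>u\<leftarrow>sw cop k (t!i). G (take i t @ u @ drop (Suc i) t))
       = (\<Sum>v\<leftarrow>sw cop (n + k) x. G v)"
  using assms
proof (induction i arbitrary: n x G)
  case 0
  then show ?case using sum_sw_split_head[of n k G x] by (simp add: drop_Suc)
next
  case (Suc i)
  then obtain n' where n: "n = Suc n'" by (cases n) auto
  have G_Cons: "multilinear_form (n' + k + 1) (\<lambda>v. G (a # v))" for a
    using multilinear_form_append[of "[a]" "n' + k + 1" "[]" G] Suc.prems n by simp
  have "(\<Sum>t\<leftarrow>sw cop n x. \<Sum>u\<leftarrow>sw cop k (t!Suc i). G (take (Suc i) t @ u @ drop (Suc (Suc i)) t))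
      = (\<Sum>(a, b)\<leftarrow>cop x. \<Sum>t\<leftarrow>sw cop n' b. \<Sum>u\<leftarrow>sw cop k (t!i). G (a # take i t @ u @ drop (Suc i) t))"
    unfolding n sum_sw_Suc by simp
  also have "\<dots> = (\<Sum>(a, b)\<leftarrow>cop x. \<Sum>v\<leftarrow>sw cop (n' + k) b. G (a # v))"
    using Suc.IH[OF _ G_Cons] Suc.prems n by simp
  also have "\<dots> = (\<Sum>v\<leftarrow>sw cop (n + k) x. G v)"
    unfolding n add_Suc sum_sw_Suc ..
  finally show ?case .
qed

end

section \<open>The preantipode of a dual quasi-Hopf algebra\<close>

locale dual_quasi_hopf_algebra = sweedler_coalgebra sc cop eps
  for sc :: "'k::field \<Rightarrow> 'h::ab_group_add \<Rightarrow> 'h" and cop eps +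
  fixes m :: "'h \<Rightarrow> 'h \<Rightarrow> 'h" and one :: 'h
    and w wi :: "'h \<Rightarrow> 'h \<Rightarrow> 'h \<Rightarrow> 'k"
    and s :: "'h \<Rightarrow> 'h" and \<alpha> \<beta> :: "'h \<Rightarrow> 'k"
  assumes dual_quasi_hopf: "dual_quasi_hopf sc m one cop eps w wi s \<alpha> \<beta>"
begin

lemma structure_maps_add_scale:
  "s (x + y) = s x + s y" "s (sc c x) = sc c (s x)"
  "m (x + y) z = m x z + m y z" "m (sc c x) z = sc c (m x z)"
  "m z (x + y) = m z x + m z y" "m z (sc c x) = sc c (m z x)"
  "w (x + y) a b = w x a b + w y a b" "w (sc c x) a b = c * w x a b"
  "w a (x + y) b = w a x b + w a y b" "w a (sc c x) b = c * w a x b"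
  "w a b (x + y) = w a b x + w a b y" "w a b (sc c x) = c * w a b x"
  "\<alpha> (x + y) = \<alpha> x + \<alpha> y" "\<alpha> (sc c x) = c * \<alpha> x"
  "\<beta> (x + y) = \<beta> x + \<beta> y" "\<beta> (sc c x) = c * \<beta> x"
  using dual_quasi_hopf
  by (auto simp: dual_quasi_hopf_def dual_quasi_bialgebra_def bilinear_map_def
      trilinear_form_def linear_iff)

definition S :: "'h \<Rightarrow> 'h" where
  "S h = (\<Sum>t\<leftarrow>sw cop 2 h. sc (\<beta> (t!0) * \<alpha> (t!2)) (s (t!1)))"

lemma linear_form_S_eq:
  assumes "linear_form f"
  shows "f (S h) = (\<Sum>t\<leftarrow>sw cop 2 h. \<beta> (t!0) * \<alpha> (t!2) * f (s (t!1)))"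
  unfolding S_def by (simp add: linear_sum_list[OF assms] linear_scale[OF assms])

lemma linear_S: "Vector_Spaces.linear sc sc S"
proof -
  have fS: "linear_form (\<lambda>h. f (S h))" if f: "linear_form f" for f
  proof -
    have "multilinear_form 3 (\<lambda>t. \<beta> (t!0) * \<alpha> (t!2) * f (s (t!1)))"
      by (rule multilinear_formI; simp add: less_Suc_eq numeral_eq_Suc; elim disjE;
          simp add: structure_maps_add_scale linear_add[OF f] linear_scale[OF f] algebra_simps)
    then have "linear_form (\<lambda>h. \<Sum>t\<leftarrow>sw cop 2 h. \<beta> (t!0) * \<alpha> (t!2) * f (s (t!1)))"
      using linear_sum_sw[of "[]" 2 "[]"] by (simp add: numeral_3_eq_3)
    then show ?thesis by (simp add: linear_form_S_eq[OF f])
  qed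
  have "S (x + y) = S x + S y" "S (sc c x) = sc c (S x)" for c x y
    using linear_add[OF fS] linear_scale[OF fS] linear_add linear_scale
    by (auto intro!: linear_forms_separate)
  then show ?thesis
    using vs1.vector_space_axioms by (simp add: linear_iff)
qed

lemma sum_sw_1_s:
  assumes "multilinear_form 2 P"
  shows "(\<Sum>u\<leftarrow>sw cop 1 (s x). P u) = (\<Sum>t\<leftarrow>sw cop 1 x. P [s (t!1), s (t!0)])"
proof -
  have "tens_eq sc 2 (sw cop 1 (s x)) (map (\<lambda>t. [s (t!1), s (t!0)]) (sw cop 1 x))"
    using dual_quasi_hopf by (simp add: dual_quasi_hopf_def)
  then have "(\<Sum>u\<leftarrow>sw cop 1 (s x). P u) = (\<Sum>u\<leftarrow>map (\<lambda>t. [s (t!1), s (t!0)]) (sw cop 1 x). P u)"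
    by (rule tens_eq_sum_eq[OF _ _ assms]) (auto dest: length_sw)
  then show ?thesis by (simp add: o_def)
qed

lemma sum_sw_1_S:
  assumes P: "multilinear_form 2 P"
  shows "(\<Sum>u\<leftarrow>sw cop 1 (S y). P u) = (\<Sum>z\<leftarrow>sw cop 3 y. \<beta> (z!0) * \<alpha> (z!3) * P [s (z!2), s (z!1)])"
proof -
  define Q where "Q z = \<beta> (z!0) * \<alpha> (z!3) * P [s (z!2), s (z!1)]" for z
  have lin_left: "linear_form (\<lambda>x. P [x, b])" and lin_right: "linear_form (\<lambda>x. P [a, x])" for a b
    using multilinear_formD[OF P, of "[]" "[b]"] multilinear_formD[OF P, of "[a]" "[]"] by simp_all
  have "multilinear_form (3 + 1) Q"
    unfolding Q_def
    by (rule multilinear_formI; simp add: less_Suc_eq numeral_eq_Suc; elim disjE;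
        simp add: structure_maps_add_scale linear_add[OF lin_left] linear_scale[OF lin_left]
          linear_add[OF lin_right] linear_scale[OF lin_right] algebra_simps)
  then have Q: "multilinear_form (2 + 1 + 1) Q" by simp
  have lin: "linear_form (\<lambda>y. \<Sum>u\<leftarrow>sw cop 1 y. P u)"
    by (rule linear_sum_sw_1[OF P])
  have "(\<Sum>u\<leftarrow>sw cop 1 (S y). P u)
      = (\<Sum>t\<leftarrow>sw cop 2 y. \<beta> (t!0) * \<alpha> (t!2) * (\<Sum>u\<leftarrow>sw cop 1 (s (t!1)). P u))"
    unfolding S_def linear_sum_list[OF lin] by (rule sum_list_map_cong) (rule linear_scale[OF lin])
  also have "\<dots> = (\<Sum>t\<leftarrow>sw cop 2 y. \<Sum>r\<leftarrow>sw cop 1 (t!1). Q (take 1 t @ r @ drop (Suc 1) t))"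
  proof (rule sum_list_map_cong)
    fix t assume "t \<in> set (sw cop 2 y)"
    then obtain a b c where t: "t = [a, b, c]" by (rule sw_2_memberE)
    have "(\<Sum>r\<leftarrow>sw cop 1 b. Q ([a] @ r @ [c])) = (\<Sum>r\<leftarrow>sw cop 1 b. \<beta> a * \<alpha> c * P [s (r!1), s (r!0)])"
      by (rule sum_list_map_cong) (auto dest!: length_sw simp: Q_def nth_append)
    then show "\<beta> (t!0) * \<alpha> (t!2) * (\<Sum>u\<leftarrow>sw cop 1 (s (t!1)). P u)
        = (\<Sum>r\<leftarrow>sw cop 1 (t!1). Q (take 1 t @ r @ drop (Suc 1) t))"
      using sum_sw_1_s[OF P, of b] by (simp add: t sum_list_const_mult)
  qed
  also have "\<dots> = (\<Sum>z\<leftarrow>sw cop 3 y. Q z)"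
    using sum_sw_split[OF _ Q, of 1 y] by simp
  finally show ?thesis by (simp add: Q_def)
qed

lemma sum_omega_S: "(\<Sum>t\<leftarrow>sw cop 2 x. w (t!0) (S (t!1)) (t!2)) = eps x"
proof -
  define G where "G z = w (z!0) (sc (\<beta> (z!1) * \<alpha> (z!3)) (s (z!2))) (z!4)" for z
  have "multilinear_form 5 G"
    unfolding G_def
    by (rule multilinear_formI; simp add: less_Suc_eq numeral_eq_Suc; elim disjE;
        simp add: structure_maps_add_scale algebra_simps)
  then have G: "multilinear_form (2 + 2 + 1) G" by simp
  have lin: "linear_form (\<lambda>y. w a y b)" for a b
    by (rule linear_formI) (simp add: structure_maps_add_scale)
  have "(\<Sum>t\<leftarrow>sw cop 2 x. w (t!0) (S (t!1)) (t!2))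
      = (\<Sum>t\<leftarrow>sw cop 2 x. \<Sum>v\<leftarrow>sw cop 2 (t!1). G (take 1 t @ v @ drop (Suc 1) t))"
  proof (rule sum_list_map_cong)
    fix t assume "t \<in> set (sw cop 2 x)"
    then obtain a b c where t: "t = [a, b, c]" by (rule sw_2_memberE)
    have "(\<Sum>v\<leftarrow>sw cop 2 b. G ([a] @ v @ [c]))
        = (\<Sum>v\<leftarrow>sw cop 2 b. w a (sc (\<beta> (v!0) * \<alpha> (v!2)) (s (v!1))) c)"
      by (rule sum_list_map_cong) (auto dest!: length_sw simp: G_def nth_append)
    then show "w (t!0) (S (t!1)) (t!2) = (\<Sum>v\<leftarrow>sw cop 2 (t!1). G (take 1 t @ v @ drop (Suc 1) t))"
      using linear_sum_list[OF lin[of a c]] by (simp add: t S_def)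
  qed
  also have "\<dots> = (\<Sum>z\<leftarrow>sw cop 4 x. G z)"
    using sum_sw_split[OF _ G, of 1 x] by simp
  also have "\<dots> = eps x"
    using dual_quasi_hopf by (simp add: dual_quasi_hopf_def G_def)
  finally show ?thesis .
qed

lemma sum_mult_beta_s:
  assumes "linear_form g"
  shows "(\<Sum>z\<leftarrow>sw cop 2 x. \<beta> (z!1) * g (m (z!0) (s (z!2)))) = \<beta> x * g one"
proof -
  have "(\<Sum>z\<leftarrow>sw cop 2 x. \<beta> (z!1) * g (m (z!0) (s (z!2))))
      = g (\<Sum>z\<leftarrow>sw cop 2 x. sc (\<beta> (z!1)) (m (z!0) (s (z!2))))"
    by (simp add: linear_sum_list[OF assms] linear_scale[OF assms])
  also have "\<dots> = \<beta> x * g one"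
    using dual_quasi_hopf by (simp add: dual_quasi_hopf_def linear_scale[OF assms])
  finally show ?thesis .
qed

lemma sum_s_alpha_mult:
  assumes "linear_form f"
  shows "(\<Sum>z\<leftarrow>sw cop 2 x. \<alpha> (z!1) * f (m (s (z!0)) (z!2))) = \<alpha> x * f one"
proof -
  have "(\<Sum>z\<leftarrow>sw cop 2 x. \<alpha> (z!1) * f (m (s (z!0)) (z!2)))
      = f (\<Sum>z\<leftarrow>sw cop 2 x. sc (\<alpha> (z!1)) (m (s (z!0)) (z!2)))"
    by (simp add: linear_sum_list[OF assms] linear_scale[OF assms])
  also have "\<dots> = \<alpha> x * f one"
    using dual_quasi_hopf by (simp add: dual_quasi_hopf_def linear_scale[OF assms])
  finally show ?thesis .
qed

lemma sum_S_coproduct_left_mult: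
  assumes f: "linear_form f" and g: "linear_form g"
  shows "(\<Sum>t\<leftarrow>sw cop 1 x. \<Sum>u\<leftarrow>sw cop 1 (S (t!1)). f (u!0) * g (m (t!0) (u!1))) = f (S x) * g one"
proof -
  define G where "G v = \<beta> (v!1) * \<alpha> (v!4) * f (s (v!3)) * g (m (v!0) (s (v!2)))" for v
  have "multilinear_form 5 G"
    unfolding G_def
    by (rule multilinear_formI; simp add: less_Suc_eq numeral_eq_Suc; elim disjE;
        simp add: structure_maps_add_scale linear_add[OF f] linear_scale[OF f]
          linear_add[OF g] linear_scale[OF g] algebra_simps)
  then have G: "multilinear_form (1 + 3 + 1) G" "multilinear_form (2 + 2 + 1) G" by simp_all
  have P: "multilinear_form 2 (\<lambda>u. f (u!0) * g (m a (u!1)))" for a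
    by (rule multilinear_form_2I; rule linear_formI)
      (simp_all add: structure_maps_add_scale linear_add[OF f] linear_scale[OF f]
        linear_add[OF g] linear_scale[OF g] algebra_simps)
  have "(\<Sum>t\<leftarrow>sw cop 1 x. \<Sum>u\<leftarrow>sw cop 1 (S (t!1)). f (u!0) * g (m (t!0) (u!1)))
      = (\<Sum>t\<leftarrow>sw cop 1 x. \<Sum>z\<leftarrow>sw cop 3 (t!1). G (take 1 t @ z @ drop (Suc 1) t))"
  proof (rule sum_list_map_cong)
    fix t assume "t \<in> set (sw cop 1 x)"
    then obtain a b where t: "t = [a, b]" by (rule sw_1_memberE)
    have "(\<Sum>z\<leftarrow>sw cop 3 b. \<beta> (z!0) * \<alpha> (z!3) * (f (s (z!2)) * g (m a (s (z!1)))))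
        = (\<Sum>z\<leftarrow>sw cop 3 b. G ([a] @ z @ []))"
      by (rule sum_list_map_cong) (auto dest!: length_sw simp: G_def ac_simps)
    then show "(\<Sum>u\<leftarrow>sw cop 1 (S (t!1)). f (u!0) * g (m (t!0) (u!1)))
        = (\<Sum>z\<leftarrow>sw cop 3 (t!1). G (take 1 t @ z @ drop (Suc 1) t))"
      using sum_sw_1_S[OF P[of a], of b] by (simp add: t)
  qed
  also have "\<dots> = (\<Sum>v\<leftarrow>sw cop 4 x. G v)"
    using sum_sw_split[OF _ G(1), of 1 x] by simp
  also have "\<dots> = (\<Sum>y\<leftarrow>sw cop 2 x. \<Sum>z\<leftarrow>sw cop 2 (y!0). G (take 0 y @ z @ drop (Suc 0) y))"
    using sum_sw_split[OF _ G(2), of 0 x] by simp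
  also have "\<dots> = (\<Sum>y\<leftarrow>sw cop 2 x. \<beta> (y!0) * \<alpha> (y!2) * f (s (y!1)) * g one)"
  proof (rule sum_list_map_cong)
    fix y assume "y \<in> set (sw cop 2 x)"
    then obtain a b c where y: "y = [a, b, c]" by (rule sw_2_memberE)
    have "(\<Sum>z\<leftarrow>sw cop 2 a. G (z @ [b, c]))
        = \<alpha> c * f (s b) * (\<Sum>z\<leftarrow>sw cop 2 a. \<beta> (z!1) * g (m (z!0) (s (z!2))))"
      unfolding sum_list_const_mult[symmetric]
      by (rule sum_list_map_cong) (auto dest!: length_sw simp: G_def nth_append)
    then show "(\<Sum>z\<leftarrow>sw cop 2 (y!0). G (take 0 y @ z @ drop (Suc 0) y))
        = \<beta> (y!0) * \<alpha> (y!2) * f (s (y!1)) * g one"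
      using sum_mult_beta_s[OF g, of a] by (simp add: y)
  qed
  also have "\<dots> = f (S x) * g one"
    by (simp add: linear_form_S_eq[OF f] sum_list_mult_const)
  finally show ?thesis .
qed

lemma sum_S_coproduct_right_mult:
  assumes f: "linear_form f" and g: "linear_form g"
  shows "(\<Sum>t\<leftarrow>sw cop 1 x. \<Sum>u\<leftarrow>sw cop 1 (S (t!0)). f (m (u!0) (t!1)) * g (u!1)) = f one * g (S x)"
proof -
  define G where "G v = \<beta> (v!0) * \<alpha> (v!3) * f (m (s (v!2)) (v!4)) * g (s (v!1))" for v
  have "multilinear_form 5 G"
    unfolding G_def
    by (rule multilinear_formI; simp add: less_Suc_eq numeral_eq_Suc; elim disjE;
        simp add: structure_maps_add_scale linear_add[OF f] linear_scale[OF f]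
          linear_add[OF g] linear_scale[OF g] algebra_simps)
  then have G: "multilinear_form (1 + 3 + 1) G" "multilinear_form (2 + 2 + 1) G" by simp_all
  have P: "multilinear_form 2 (\<lambda>u. f (m (u!0) a) * g (u!1))" for a
    by (rule multilinear_form_2I; rule linear_formI)
      (simp_all add: structure_maps_add_scale linear_add[OF f] linear_scale[OF f]
        linear_add[OF g] linear_scale[OF g] algebra_simps)
  have "(\<Sum>t\<leftarrow>sw cop 1 x. \<Sum>u\<leftarrow>sw cop 1 (S (t!0)). f (m (u!0) (t!1)) * g (u!1))
      = (\<Sum>t\<leftarrow>sw cop 1 x. \<Sum>z\<leftarrow>sw cop 3 (t!0). G (take 0 t @ z @ drop (Suc 0) t))"
  proof (rule sum_list_map_cong)
    fix t assume "t \<in> set (sw cop 1 x)"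
    then obtain a b where t: "t = [a, b]" by (rule sw_1_memberE)
    have "(\<Sum>z\<leftarrow>sw cop 3 a. \<beta> (z!0) * \<alpha> (z!3) * (f (m (s (z!2)) b) * g (s (z!1))))
        = (\<Sum>z\<leftarrow>sw cop 3 a. G (z @ [b]))"
      by (rule sum_list_map_cong) (auto dest!: length_sw simp: G_def nth_append ac_simps)
    then show "(\<Sum>u\<leftarrow>sw cop 1 (S (t!0)). f (m (u!0) (t!1)) * g (u!1))
        = (\<Sum>z\<leftarrow>sw cop 3 (t!0). G (take 0 t @ z @ drop (Suc 0) t))"
      using sum_sw_1_S[OF P[of b], of a] by (simp add: t)
  qed
  also have "\<dots> = (\<Sum>v\<leftarrow>sw cop 4 x. G v)"
    using sum_sw_split[OF _ G(1), of 0 x] by simp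
  also have "\<dots> = (\<Sum>y\<leftarrow>sw cop 2 x. \<Sum>z\<leftarrow>sw cop 2 (y!2). G (take 2 y @ z @ drop (Suc 2) y))"
    using sum_sw_split[OF _ G(2), of 2 x] by simp
  also have "\<dots> = (\<Sum>y\<leftarrow>sw cop 2 x. f one * (\<beta> (y!0) * \<alpha> (y!2) * g (s (y!1))))"
  proof (rule sum_list_map_cong)
    fix y assume "y \<in> set (sw cop 2 x)"
    then obtain a b c where y: "y = [a, b, c]" by (rule sw_2_memberE)
    have "(\<Sum>z\<leftarrow>sw cop 2 c. G ([a, b] @ z))
        = \<beta> a * g (s b) * (\<Sum>z\<leftarrow>sw cop 2 c. \<alpha> (z!1) * f (m (s (z!0)) (z!2)))"
      unfolding sum_list_const_mult[symmetric]
      by (rule sum_list_map_cong) (auto dest!: length_sw simp: G_def)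
    then show "(\<Sum>z\<leftarrow>sw cop 2 (y!2). G (take 2 y @ z @ drop (Suc 2) y))
        = f one * (\<beta> (y!0) * \<alpha> (y!2) * g (s (y!1)))"
      using sum_s_alpha_mult[OF f, of c] by (simp add: y)
  qed
  also have "\<dots> = f one * g (S x)"
    by (simp add: linear_form_S_eq[OF g] sum_list_const_mult)
  finally show ?thesis .
qed

lemma preantipode_S: "preantipode sc m one cop eps w S"
  unfolding preantipode_def
proof (intro conjI allI linear_S sum_omega_S)
  fix x
  show "tens_eq sc 2
          (concat (map (\<lambda>t. map (\<lambda>u. [u!0, m (t!0) (u!1)]) (sw cop 1 (S (t!1)))) (sw cop 1 x)))
          [[S x, one]]"
    by (rule tens_eq_2I)
      (use sum_S_coproduct_left_mult in \<open>auto simp: sum_list_concat_map o_def\<close>)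
  show "tens_eq sc 2
          (concat (map (\<lambda>t. map (\<lambda>u. [m (u!0) (t!1), u!1]) (sw cop 1 (S (t!0)))) (sw cop 1 x)))
          [[one, S x]]"
    by (rule tens_eq_2I)
      (use sum_S_coproduct_right_mult in \<open>auto simp: sum_list_concat_map o_def\<close>)
qed

end

theorem theorem3p10:
  fixes sc :: "'k::field \<Rightarrow> 'h::ab_group_add \<Rightarrow> 'h"
    and m :: "'h \<Rightarrow> 'h \<Rightarrow> 'h" and one :: 'h
    and cop :: "'h \<Rightarrow> ('h \<times> 'h) list" and eps :: "'h \<Rightarrow> 'k"
    and w wi :: "'h \<Rightarrow> 'h \<Rightarrow> 'h \<Rightarrow> 'k"
    and s :: "'h \<Rightarrow> 'h" and \<alpha> \<beta> :: "'h \<Rightarrow> 'k"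
  assumes "dual_quasi_hopf sc m one cop eps w wi s \<alpha> \<beta>"
  shows "preantipode sc m one cop eps w
           (\<lambda>h. \<Sum>t\<leftarrow>sw cop 2 h. sc (\<beta> (t!0) * \<alpha> (t!2)) (s (t!1)))"
proof -
  have "vector_space ((*) :: 'k \<Rightarrow> 'k \<Rightarrow> 'k)"
    by unfold_locales (simp_all add: algebra_simps)
  moreover have "coalgebra sc cop eps"
    using assms by (simp add: dual_quasi_hopf_def dual_quasi_bialgebra_def)
  ultimately interpret dual_quasi_hopf_algebra sc cop eps m one w wi s \<alpha> \<beta>
    using assms
    by (simp add: dual_quasi_hopf_algebra_def dual_quasi_hopf_algebra_axioms_def
        sweedler_coalgebra_def sweedler_coalgebra_axioms_def linear_forms_def
        vector_space_pair_def coalgebra_def)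
  show ?thesis
    using preantipode_S by (simp add: S_def[abs_def])
qed

end
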